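(* Let $\Gamma$ be a finite simple graph. Then $\Gamma$ admits no $k$-extended irregular dominating set for $k=2$ and for $k=3$.
   Context: Let $\Gamma=(V,E)$ be a finite simple undirected graph with graph distance $d$. A vertex $v$ carrying a non-negative integer label $\ell$ is said to dominate (or cover) exactly the vertices $u$ with $d(u,v)=\ell$; in particular a vertex labeled $0$ dominates only itself. For $k\ge 0$, a $k$-extended irregular dominating set is a set $S\subseteq V$ of $k$ vertices together with a labeling $\lambda:S\to\mathbb{Z}_{\ge 0}$ assigning distinct labels to distinct vertices, such that every vertex of $V$ is dominated by at least one vertex of $S$; throughout, it is assumed that some vertex of $S$ has label $0$. The labeling $\lambda$ is called a $k$-extended irregular dominating labeling. *)

theory Defs
  imports Main
begin

definition simple_graph :: "'a set \<Rightarrow> ('a \<Rightarrow> 'a \<Rightarrow> bool) \<Rightarrow> bool" where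
  "simple_graph V E \<longleftrightarrow> finite V \<and> (\<forall>u v. E u v \<longrightarrow> u \<in> V \<and> v \<in> V)
     \<and> (\<forall>u v. E u v \<longrightarrow> E v u) \<and> (\<forall>u. \<not> E u u)"

text \<open>A walk is a nonempty list of vertices of V, consecutive ones adjacent;
its length is the number of edges, i.e. length minus one.\<close>
definition walk :: "'a set \<Rightarrow> ('a \<Rightarrow> 'a \<Rightarrow> bool) \<Rightarrow> 'a list \<Rightarrow> bool" where
  "walk V E xs \<longleftrightarrow> xs \<noteq> [] \<and> set xs \<subseteq> V \<and> (\<forall>i. Suc i < length xs \<longrightarrow> E (xs ! i) (xs ! Suc i))"

definition walk_between :: "'a set \<Rightarrow> ('a \<Rightarrow> 'a \<Rightarrow> bool) \<Rightarrow> 'a \<Rightarrow> 'a \<Rightarrow> nat \<Rightarrow> bool" where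
  "walk_between V E u v n \<longleftrightarrow> (\<exists>xs. walk V E xs \<and> hd xs = u \<and> last xs = v \<and> length xs = Suc n)"

text \<open>graph distance: d(u,v) = n iff there is a u-v walk of length n and none shorter
(vertices in different components have infinite distance, equal to no natural number).\<close>
definition dist_is :: "'a set \<Rightarrow> ('a \<Rightarrow> 'a \<Rightarrow> bool) \<Rightarrow> 'a \<Rightarrow> 'a \<Rightarrow> nat \<Rightarrow> bool" where
  "dist_is V E u v n \<longleftrightarrow> walk_between V E u v n \<and> (\<forall>m<n. \<not> walk_between V E u v m)"

definition dominates :: "'a set \<Rightarrow> ('a \<Rightarrow> 'a \<Rightarrow> bool) \<Rightarrow> 'a \<Rightarrow> nat \<Rightarrow> 'a \<Rightarrow> bool" where
  "dominates V E v l u \<longleftrightarrow> dist_is V E u v l"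

definition ext_irr_dom_set ::
  "'a set \<Rightarrow> ('a \<Rightarrow> 'a \<Rightarrow> bool) \<Rightarrow> nat \<Rightarrow> 'a set \<Rightarrow> ('a \<Rightarrow> nat) \<Rightarrow> bool" where
  "ext_irr_dom_set V E k S lam \<longleftrightarrow> S \<subseteq> V \<and> card S = k \<and> inj_on lam S
     \<and> (\<exists>s\<in>S. lam s = 0) \<and> (\<forall>u\<in>V. \<exists>s\<in>S. dominates V E s (lam s) u)"

end

theory Submission
  imports Defs
begin

text \<open>Apart from the vertex z labelled 0, which dominates only itself, every vertex t of S
has a nonzero label and so cannot dominate itself either; hence t is dominated by a third vertex
of S. For k = 2 there is no third vertex. For k = 3 the two vertices b, c with nonzero labels
must dominate each other, so by symmetry of the distance d(b,c) equals both labels,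
contradicting injectivity.\<close>

lemma walk_rev:
  assumes "symp E" and "walk V E xs"
  shows "walk V E (rev xs)"
  unfolding walk_def
proof (intro conjI allI impI)
  show "rev xs \<noteq> []" and "set (rev xs) \<subseteq> V"
    using assms(2) unfolding walk_def by auto
next
  fix i assume i: "Suc i < length (rev xs)"
  define j where "j = length xs - Suc (Suc i)"
  have j: "Suc j < length xs" "length xs - Suc i = Suc j" "length xs - Suc (Suc i) = j"
    using i unfolding j_def by auto
  have "E (xs ! j) (xs ! Suc j)"
    using assms(2) j(1) unfolding walk_def by blast
  then have "E (xs ! Suc j) (xs ! j)"
    by (rule sympD[OF assms(1)])
  then show "E (rev xs ! i) (rev xs ! Suc i)"
    using i j by (simp add: rev_nth)
qed

lemma walk_between_sym:
  assumes "symp E" and "walk_between V E u v n"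
  shows "walk_between V E v u n"
proof -
  obtain xs where xs: "walk V E xs" "hd xs = u" "last xs = v" "length xs = Suc n"
    using assms(2) unfolding walk_between_def by blast
  then have "xs \<noteq> []" by auto
  with xs walk_rev[OF assms(1) xs(1)] show ?thesis
    unfolding walk_between_def by (intro exI[of _ "rev xs"]) (simp add: hd_rev last_rev)
qed

lemma dist_is_sym: "symp E \<Longrightarrow> dist_is V E u v n \<Longrightarrow> dist_is V E v u n"
  unfolding dist_is_def by (meson walk_between_sym)

lemma dist_is_unique: "dist_is V E u v n \<Longrightarrow> dist_is V E u v m \<Longrightarrow> n = m"
  unfolding dist_is_def by (metis linorder_neqE_nat)

lemma dist_is_refl: "u \<in> V \<Longrightarrow> dist_is V E u u 0"
  unfolding dist_is_def walk_between_def walk_def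
  by (intro conjI exI[of _ "[u]"]) auto

lemma dist_is_0_imp_eq: "dist_is V E u v 0 \<Longrightarrow> u = v"
  unfolding dist_is_def walk_between_def by (auto simp: length_Suc_conv)

lemma dominates_self_imp_0: "v \<in> V \<Longrightarrow> dominates V E v l v \<Longrightarrow> l = 0"
  unfolding dominates_def by (metis dist_is_refl dist_is_unique)

lemma dominates_0_imp_eq: "dominates V E v 0 u \<Longrightarrow> u = v"
  unfolding dominates_def by (rule dist_is_0_imp_eq)

lemma dominates_mutual_imp_eq:
  "symp E \<Longrightarrow> dominates V E u l v \<Longrightarrow> dominates V E v m u \<Longrightarrow> l = m"
  unfolding dominates_def by (metis dist_is_sym dist_is_unique)

lemma ext_irr_dom_set_dominated_by_third:
  assumes dom: "ext_irr_dom_set V E k S lam"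
    and z: "z \<in> S" "lam z = 0" and t: "t \<in> S" "t \<noteq> z"
  shows "\<exists>s \<in> S - {z, t}. dominates V E s (lam s) t"
proof -
  have "S \<subseteq> V" and inj: "inj_on lam S"
    and "\<forall>u\<in>V. \<exists>s\<in>S. dominates V E s (lam s) u"
    using dom unfolding ext_irr_dom_set_def by auto
  with t obtain s where s: "s \<in> S" "dominates V E s (lam s) t" and "t \<in> V" by blast
  have "lam t \<noteq> 0"
    using inj z t by (metis inj_on_contraD)
  with s \<open>t \<in> V\<close> have "s \<noteq> t" by (metis dominates_self_imp_0)
  moreover have "s \<noteq> z"
    using s z t by (metis dominates_0_imp_eq)
  ultimately show ?thesis using s by blast
qed

lemma no_ext_irr_dom_set_2: "\<not> ext_irr_dom_set V E 2 S lam"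
proof
  assume dom: "ext_irr_dom_set V E 2 S lam"
  then obtain z where z: "z \<in> S" "lam z = 0"
    unfolding ext_irr_dom_set_def by blast
  from dom have "card S = 2" unfolding ext_irr_dom_set_def by blast
  with z have "card (S - {z}) = 1" by (simp add: card_ge_0_finite)
  then obtain t where "S - {z} = {t}" by (rule card_1_singletonE)
  with ext_irr_dom_set_dominated_by_third[OF dom z, of t] show False by auto
qed

lemma no_ext_irr_dom_set_3:
  assumes "symp E"
  shows "\<not> ext_irr_dom_set V E 3 S lam"
proof
  assume dom: "ext_irr_dom_set V E 3 S lam"
  then obtain z where z: "z \<in> S" "lam z = 0"
    unfolding ext_irr_dom_set_def by blast
  from dom have "card S = 3" and inj: "inj_on lam S"
    unfolding ext_irr_dom_set_def by blast+
  with z have "card (S - {z}) = 2" by (simp add: card_ge_0_finite)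
  then obtain b c where S: "S - {z} = {b, c}" and "b \<noteq> c"
    by (meson card_2_iff)
  then have b: "b \<in> S" "b \<noteq> z" and c: "c \<in> S" "c \<noteq> z"
    and "S - {z, b} = {c}" and "S - {z, c} = {b}"
    by blast+
  then have "dominates V E c (lam c) b" and "dominates V E b (lam b) c"
    using ext_irr_dom_set_dominated_by_third[OF dom z b]
      ext_irr_dom_set_dominated_by_third[OF dom z c] by simp_all
  then have "lam c = lam b"
    by (rule dominates_mutual_imp_eq[OF assms])
  then show False
    using inj_onD[OF inj _ b(1) c(1)] \<open>b \<noteq> c\<close> by simp
qed

theorem proposition2p2:
  fixes V :: "'a set" and E :: "'a \<Rightarrow> 'a \<Rightarrow> bool"
    and S :: "'a set" and lam :: "'a \<Rightarrow> nat" and k :: nat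
  assumes "simple_graph V E"
    and "k = 2 \<or> k = 3"
  shows "\<not> ext_irr_dom_set V E k S lam"
proof -
  have "symp E"
    using assms(1) unfolding simple_graph_def by (auto intro: sympI)
  then show ?thesis
    using assms(2) no_ext_irr_dom_set_2 no_ext_irr_dom_set_3 by blast
qed

end
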